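(* Let $\Sigma$ be a topological Markov chain with shift $\sigma$ and $\mu$ a Gibbs measure on $\Sigma$ for a H\"older continuous potential (as in the context), and let $\varepsilon>0$. Then there exists a sequence of cylinders $\{C_n\}$, $C_n$ defined on an interval $\Lambda_n\subset\mathbb Z$, with $\sum_n\mu(C_n)=\infty$, such that the center of each $\Lambda_n$ lies in $[-\varepsilon|\Lambda_n|/2,\varepsilon|\Lambda_n|/2]$, and such that for $\mu$-a.e. $\underline\omega\in\Sigma$ there are only finitely many $n$ with $\sigma^n\underline\omega\in C_n$ (in particular $\{C_n\}$ is not a Borel-Cantelli sequence). The same holds with the centering condition replaced by: the left endpoint of each $\Lambda_n$ lies in $[0,\varepsilon|\Lambda_n|]$.
   Context: Let $M\ge2$ and $\mathbf A$ an $M\times M$ zero-one matrix with $\mathbf A^K$ entrywise positive for some $K\ge1$; $\Sigma=\{\underline\omega\in\{1,\dots,M\}^{\mathbb Z}:\mathbf A_{\omega_i\omega_{i+1}}=1\ \forall i\}$ with product topology and left shift $(\sigma\underline\omega)_i=\omega_{i+1}$; $\mu$ is the unique $\sigma$-invariant Gibbs measure of a H\"older continuous function on $\Sigma$. A cylinder defined on $\Lambda=[n^-,n^+]\subset\mathbb Z$ is $\{\underline\omega'\in\Sigma:\omega_i'=\omega_i,\ n^-\le i\le n^+\}$ for fixed symbols $\omega_i$; $|\Lambda|=n^+-n^-+1$, and the center of $\Lambda$ is $(n^-+n^+)/2$. A sequence of sets $\{A_n\}$ with $\sum\mu(A_n)=\infty$ is a Borel-Cantelli sequence if for $\mu$-a.e.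 $\underline\omega$ there are infinitely many $n$ with $\sigma^n\underline\omega\in A_n$. *)

theory Defs
  imports "HOL-Probability.Probability"
begin

text \<open>Symbols are 1..M; a zero-one matrix is a function nat => nat => nat.
  Sequences are functions int => nat, with the product topology (nat discrete).\<close>

definition zero_one_matrix :: "nat \<Rightarrow> (nat \<Rightarrow> nat \<Rightarrow> nat) \<Rightarrow> bool" where
  "zero_one_matrix M A \<longleftrightarrow> (\<forall>i\<in>{1..M}. \<forall>j\<in>{1..M}. A i j = 0 \<or> A i j = 1)"

fun mat_pow :: "nat \<Rightarrow> (nat \<Rightarrow> nat \<Rightarrow> nat) \<Rightarrow> nat \<Rightarrow> nat \<Rightarrow> nat \<Rightarrow> nat" where
  "mat_pow M A 0 i j = (if i = j then 1 else 0)"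
| "mat_pow M A (Suc k) i j = (\<Sum>l\<in>{1..M}. mat_pow M A k i l * A l j)"

definition TMC :: "nat \<Rightarrow> (nat \<Rightarrow> nat \<Rightarrow> nat) \<Rightarrow> (int \<Rightarrow> nat) set" where
  "TMC M A = {\<omega>. (\<forall>i. \<omega> i \<in> {1..M}) \<and> (\<forall>i. A (\<omega> i) (\<omega> (i + 1)) = 1)}"

definition shift :: "(int \<Rightarrow> nat) \<Rightarrow> (int \<Rightarrow> nat)" where
  "shift \<omega> = (\<lambda>i. \<omega> (i + 1))"

definition cyl :: "nat \<Rightarrow> (nat \<Rightarrow> nat \<Rightarrow> nat) \<Rightarrow> int \<Rightarrow> int \<Rightarrow> (int \<Rightarrow> nat) \<Rightarrow> (int \<Rightarrow> nat) set" where
  "cyl M A a b w = {\<omega> \<in> TMC M A. \<forall>i\<in>{a..b}. \<omega> i = w i}"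

text \<open>Hoelder continuity w.r.t. the metric d(x,y) = theta^(min{|i| : x_i /= y_i}).\<close>
definition holder :: "nat \<Rightarrow> (nat \<Rightarrow> nat \<Rightarrow> nat) \<Rightarrow> ((int \<Rightarrow> nat) \<Rightarrow> real) \<Rightarrow> bool" where
  "holder M A \<phi> \<longleftrightarrow> (\<exists>c \<theta>. 0 < \<theta> \<and> \<theta> < 1 \<and>
     (\<forall>x\<in>TMC M A. \<forall>y\<in>TMC M A. \<forall>n::nat.
        (\<forall>i::int. \<bar>i\<bar> < int n \<longrightarrow> x i = y i) \<longrightarrow> \<bar>\<phi> x - \<phi> y\<bar> \<le> c * \<theta> ^ n))"

definition birkhoff_sum :: "((int \<Rightarrow> nat) \<Rightarrow> real) \<Rightarrow> nat \<Rightarrow> (int \<Rightarrow> nat) \<Rightarrow> real" where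
  "birkhoff_sum \<phi> n \<omega> = (\<Sum>k<n. \<phi> ((shift ^^ k) \<omega>))"

definition gibbs :: "nat \<Rightarrow> (nat \<Rightarrow> nat \<Rightarrow> nat) \<Rightarrow> ((int \<Rightarrow> nat) \<Rightarrow> real) \<Rightarrow> (int \<Rightarrow> nat) measure \<Rightarrow> bool" where
  "gibbs M A \<phi> \<mu> \<longleftrightarrow> (\<exists>C P. C > 0 \<and> (\<forall>\<omega>\<in>TMC M A. \<forall>n::nat. n \<ge> 1 \<longrightarrow>
      exp (- real n * P + birkhoff_sum \<phi> n \<omega>) / C \<le> measure \<mu> (cyl M A 0 (int n - 1) \<omega>) \<and>
      measure \<mu> (cyl M A 0 (int n - 1) \<omega>) \<le> C * exp (- real n * P + birkhoff_sum \<phi> n \<omega>)))"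

end

theory Submission
  imports Defs
begin

text \<open>
  Primitivity yields, for every length, many pairwise disjoint cylinders of that length, so one of
  them has small measure, and the Gibbs lower bound makes it non-null. This gives cylinders B_j of
  length 2 r_j + 1 with 0 < mu(B_j) <= 2^-(j+1) and 2^(j+1) <= eps r_j. Let m_j ~ 2^-j / mu(B_j).
  Level j of the sequence consists of m_j windows of 2^(j+1) consecutive indices n, and C_n is B_j
  translated by an offset k_n < 2^(j+1) chosen so that n + k_n is constant on each window. Then
  sum_n mu(C_n) = sum_j 2^(j+1) m_j mu(B_j) = infinity, each term being at least 1. But sigma^n w in C_n means
  sigma^(n + k_n) w in B_j, so all hits in one window form a single event of probability mu(B_j);
  these events have total probability sum_j m_j mu(B_j) <= 2, and Borel-Cantelli leaves only
  finitely many hits almost surely. Placing B_j on [-r_j, r_j] or on [0, 2 r_j] gives the two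
  variants, since k_n <= eps r_j.
\<close>

section \<open>Blocks of consecutive indices\<close>

definition block_start :: "(nat \<Rightarrow> nat) \<Rightarrow> nat \<Rightarrow> nat" where
  "block_start L j = (\<Sum>i<j. L i)"

definition block_index :: "(nat \<Rightarrow> nat) \<Rightarrow> nat \<Rightarrow> nat" where
  "block_index L n = (LEAST j. n < block_start L (Suc j))"

lemma block_start_Suc: "block_start L (Suc j) = block_start L j + L j"
  by (simp add: block_start_def)

context
  fixes L :: "nat \<Rightarrow> nat"
  assumes L_pos: "\<And>j. 0 < L j"
begin

lemma strict_mono_block_start: "strict_mono (block_start L)"
  by (rule strict_monoI_Suc) (simp add: block_start_Suc L_pos)

lemma block_index_bounds:
  "block_start L (block_index L n) \<le> n" "n < block_start L (Suc (block_index L n))"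
proof -
  have ex: "n < block_start L (Suc n)"
    using seq_suble[OF strict_mono_block_start, of "Suc n"] by simp
  show "n < block_start L (Suc (block_index L n))"
    unfolding block_index_def by (rule LeastI[of "\<lambda>j. n < block_start L (Suc j)", OF ex])
  show "block_start L (block_index L n) \<le> n"
  proof (cases "block_index L n")
    case (Suc j)
    then have "\<not> n < block_start L (Suc j)"
      unfolding block_index_def by (metis lessI not_less_Least)
    then show ?thesis using Suc by simp
  qed (simp add: block_start_def)
qed

lemma block_index_eqI:
  assumes "block_start L j \<le> n" "n < block_start L (Suc j)"
  shows "block_index L n = j"
proof (rule antisym)
  have mono: "i \<le> i' \<Longrightarrow> block_start L i \<le> block_start L i'" for i i'
    using strict_mono_block_start by (simp add: strict_mono_less_eq)
  show "block_index L n \<le> j"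
    using mono[of "Suc j" "block_index L n"] assms(2) block_index_bounds(1)[of n] by linarith
  show "j \<le> block_index L n"
    using mono[of "Suc (block_index L n)" j] assms(1) block_index_bounds(2)[of n] by linarith
qed

lemma sum_block_index:
  fixes f :: "nat \<Rightarrow> 'a :: comm_semiring_1"
  shows "(\<Sum>n<block_start L j. f (block_index L n)) = (\<Sum>i<j. of_nat (L i) * f i)"
proof (induction j)
  case (Suc j)
  have "(\<Sum>n<block_start L (Suc j). f (block_index L n)) =
      (\<Sum>n<block_start L j. f (block_index L n)) + (\<Sum>n\<in>{block_start L j..<block_start L (Suc j)}. f (block_index L n))"
    by (simp add: block_start_Suc flip: atLeast0LessThan sum.atLeastLessThan_concat)
  moreover have "(\<Sum>n\<in>{block_start L j..<block_start L (Suc j)}. f (block_index L n)) = of_nat (L j) * f j"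
    using block_index_eqI[of j] by (simp add: block_start_Suc)
  ultimately show ?case
    using Suc.IH by simp
qed (simp add: block_start_def)

lemma suminf_block_index:
  fixes f :: "nat \<Rightarrow> ennreal"
  shows "(\<Sum>n. f (block_index L n)) = (\<Sum>i. of_nat (L i) * f i)"
proof (rule LIMSEQ_unique)
  have "(\<lambda>j. \<Sum>n<block_start L j. f (block_index L n)) \<longlonglongrightarrow> (\<Sum>n. f (block_index L n))"
    using LIMSEQ_subseq_LIMSEQ[OF summable_LIMSEQ[OF summableI] strict_mono_block_start]
    by (simp add: comp_def)
  then show "(\<lambda>j. \<Sum>i<j. of_nat (L i) * f i) \<longlonglongrightarrow> (\<Sum>n. f (block_index L n))"
    by (simp add: sum_block_index)
qed (rule summable_LIMSEQ[OF summableI])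

lemma filterlim_block_index: "filterlim (block_index L) at_top sequentially"
  unfolding filterlim_at_top eventually_sequentially
proof (intro allI exI[of _ "block_start L _"] impI)
  fix j n assume "block_start L j \<le> n"
  then show "j \<le> block_index L n"
    using block_index_bounds(2)[of n] strict_mono_less[OF strict_mono_block_start]
    by (metis le_less_trans less_Suc_eq_le)
qed

end

section \<open>Sequences of preimages that are not Borel-Cantelli\<close>

lemma AE_finite_of_summable_cover:
  assumes D: "\<And>k. D k \<in> sets M" and sum_D: "(\<Sum>k. emeasure M (D k)) \<noteq> \<infinity>"
    and W: "filterlim W at_top sequentially"
    and cover: "\<And>n x. x \<in> space M \<Longrightarrow> P n x \<Longrightarrow> x \<in> D (W n)"
  shows "AE x in M. finite {n. P n x}"
proof -
  have fin: "emeasure M (D k) \<noteq> \<infinity>" for k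
    using ennreal_suminf_lessD[of "\<lambda>k. emeasure M (D k)" \<infinity>] sum_D by (simp add: top.not_eq_extremum)
  then have "(\<Sum>k. ennreal (measure M (D k))) \<noteq> \<infinity>"
    using sum_D by (simp add: emeasure_eq_ennreal_measure)
  then have "summable (\<lambda>k. measure M (D k))"
    by (intro summable_suminf_not_top) simp_all
  then have "AE x in M. eventually (\<lambda>k. x \<in> space M - D k) sequentially"
    using D fin by (intro borel_cantelli_AE1) (simp_all add: top.not_eq_extremum)
  then show ?thesis
  proof (rule AE_mp, intro AE_I2 impI)
    fix x assume x: "x \<in> space M" and ev: "eventually (\<lambda>k. x \<in> space M - D k) sequentially"
    have "eventually (\<lambda>n. x \<in> space M - D (W n)) sequentially"
      using ev W by (rule eventually_compose_filterlim)
    then have "eventually (\<lambda>n. \<not> P n x) sequentially"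
      by (rule eventually_mono) (use cover[OF x] in blast)
    then show "finite {n. P n x}"
      by (simp add: eventually_cofinite flip: cofinite_eq_sequentially)
  qed
qed

lemma emeasure_vimage_funpow:
  assumes T: "T \<in> M \<rightarrow>\<^sub>M M" "distr M M T = M" and B: "B \<in> sets M"
  shows "emeasure M ((T ^^ n) -` B \<inter> space M) = emeasure M B"
proof -
  have "distr M M (T ^^ n) = M"
  proof (induction n)
    case (Suc n)
    have "distr M M (T ^^ Suc n) = distr M M (T \<circ> T ^^ n)"
      by (simp only: funpow.simps(2))
    also have "\<dots> = distr (distr M M (T ^^ n)) M T"
      using T(1) by (intro distr_distr[symmetric] measurable_compose_n)
    also have "\<dots> = M"
      using Suc.IH T(2) by simp
    finally show ?case .
  qed (simp add: distr_id)
  then show ?thesis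
    using emeasure_distr[OF measurable_compose_n[OF T(1)] B, of n] by simp
qed

lemma (in prob_space) AE_finite_hits_of_constant_anchor:
  assumes T: "T \<in> M \<rightarrow>\<^sub>M M" "distr M M T = M" and B: "\<And>j. B j \<in> events"
    and W: "filterlim W at_top sequentially" and anchor: "\<And>n. n + k n = t (W n)"
    and summable: "(\<Sum>w. ennreal (prob (B (J w)))) \<noteq> \<infinity>"
  shows "AE x in M. finite {n. (T ^^ n) x \<in> (T ^^ k n) -` B (J (W n)) \<inter> space M}"
proof (rule AE_finite_of_summable_cover)
  define D where "D w = (T ^^ t w) -` B (J w) \<inter> space M" for w
  show "D w \<in> events" for w
    unfolding D_def using measurable_compose_n[OF T(1)] B by (rule measurable_sets)
  have "emeasure M (D w) = ennreal (prob (B (J w)))" for w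
    using emeasure_vimage_funpow[OF T B] by (simp add: D_def emeasure_eq_measure)
  then show "(\<Sum>w. emeasure M (D w)) \<noteq> \<infinity>"
    using summable by simp
  show "x \<in> D (W n)" if "x \<in> space M" "(T ^^ n) x \<in> (T ^^ k n) -` B (J (W n)) \<inter> space M" for x n
  proof -
    have "(T ^^ (k n + n)) x \<in> B (J (W n))"
      using that by (simp add: funpow_add)
    then show ?thesis
      using that(1) anchor[of n] by (simp add: D_def add.commute)
  qed
qed (rule W)

lemma (in prob_space) exists_preimages_not_borel_cantelli:
  assumes T: "T \<in> M \<rightarrow>\<^sub>M M" "distr M M T = M"
    and B: "\<And>j. B j \<in> events"
    and m_pos: "\<And>j. 0 < m j" and S_pos: "\<And>j. 0 < S j"
    and summable: "summable (\<lambda>j. real (m j) * prob (B j))"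
    and not_summable: "\<not> summable (\<lambda>j. real (m j) * real (S j) * prob (B j))"
  shows "\<exists>level k. (\<forall>n. k n < S (level n)) \<and>
    (\<Sum>n. emeasure M ((T ^^ k n) -` B (level n) \<inter> space M)) = \<infinity> \<and>
    (AE x in M. finite {n. (T ^^ n) x \<in> (T ^^ k n) -` B (level n) \<inter> space M})"
proof -
  txt \<open>Level \<open>j\<close> occupies \<open>m j\<close> consecutive windows \<open>w\<close> (with \<open>J w = j\<close>) of \<open>S j\<close> indices each;
    \<open>n + k n\<close> is the last index of the window of \<open>n\<close>.\<close>
  define J where "J = block_index m"
  define L where "L w = S (J w)" for w
  define W where "W = block_index L"
  define k where "k n = block_start L (Suc (W n)) - Suc n" for n
  have L_pos: "\<And>w. 0 < L w"
    using S_pos by (simp add: L_def)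
  have k_lt: "k n < S (J (W n))" and anchor: "n + k n = block_start L (Suc (W n)) - 1" for n
    using block_index_bounds[of L n, OF L_pos] by (simp_all add: k_def W_def L_def block_start_Suc)
  have "(\<Sum>n. emeasure M ((T ^^ k n) -` B (J (W n)) \<inter> space M)) = (\<Sum>n. ennreal (prob (B (J (W n)))))"
    using emeasure_vimage_funpow[OF T B] by (simp add: emeasure_eq_measure)
  also have "\<dots> = (\<Sum>w. of_nat (S (J w)) * ennreal (prob (B (J w))))"
    unfolding W_def by (subst suminf_block_index[of L, OF L_pos]) (simp add: L_def)
  also have "\<dots> = (\<Sum>j. of_nat (m j) * (of_nat (S j) * ennreal (prob (B j))))"
    unfolding J_def by (rule suminf_block_index[of m, OF m_pos])
  also have "\<dots> = (\<Sum>j. ennreal (real (m j) * real (S j) * prob (B j)))"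
    by (simp add: ennreal_mult' ennreal_of_nat_eq_real_of_nat mult.assoc)
  also have "\<dots> = \<infinity>"
  proof (rule ccontr)
    assume "(\<Sum>j. ennreal (real (m j) * real (S j) * prob (B j))) \<noteq> \<infinity>"
    then have "summable (\<lambda>j. real (m j) * real (S j) * prob (B j))"
      by (intro summable_suminf_not_top) simp_all
    with not_summable show False ..
  qed
  finally have diverges: "(\<Sum>n. emeasure M ((T ^^ k n) -` B (J (W n)) \<inter> space M)) = \<infinity>" .
  have "(\<Sum>w. ennreal (prob (B (J w)))) = (\<Sum>j. of_nat (m j) * ennreal (prob (B j)))"
    unfolding J_def by (rule suminf_block_index[of m, OF m_pos])
  also have "\<dots> = (\<Sum>j. ennreal (real (m j) * prob (B j)))"
    by (simp add: ennreal_mult' ennreal_of_nat_eq_real_of_nat)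
  also have "\<dots> \<noteq> \<infinity>"
    unfolding infinity_ennreal_def by (rule ennreal_suminf_neq_top[OF summable]) simp
  finally have "AE x in M. finite {n. (T ^^ n) x \<in> (T ^^ k n) -` B (J (W n)) \<inter> space M}"
    using filterlim_block_index[of L, OF L_pos, folded W_def] anchor
    by (intro AE_finite_hits_of_constant_anchor[OF T B])
  with diverges show ?thesis
    by (intro exI[of _ "\<lambda>n. J (W n)"] exI[of _ k]) (simp add: k_lt)
qed

lemma floor_divide_mult_bounds:
  fixes p x :: real
  assumes "0 < p" "2 * p \<le> x"
  shows "0 < nat \<lfloor>x / p\<rfloor>" "x / 2 \<le> real (nat \<lfloor>x / p\<rfloor>) * p" "real (nat \<lfloor>x / p\<rfloor>) * p \<le> x"
proof -
  have two: "2 \<le> x / p"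
    using assms by (simp add: field_simps)
  then have nat_floor: "real (nat \<lfloor>x / p\<rfloor>) = of_int \<lfloor>x / p\<rfloor>"
    by simp
  show "0 < nat \<lfloor>x / p\<rfloor>"
    using two by linarith
  have "x / p - 1 \<le> real (nat \<lfloor>x / p\<rfloor>)" "real (nat \<lfloor>x / p\<rfloor>) \<le> x / p"
    unfolding nat_floor by linarith+
  then have "x - p \<le> real (nat \<lfloor>x / p\<rfloor>) * p" "real (nat \<lfloor>x / p\<rfloor>) * p \<le> x"
    using assms(1) by (simp_all add: field_simps)
  then show "x / 2 \<le> real (nat \<lfloor>x / p\<rfloor>) * p" "real (nat \<lfloor>x / p\<rfloor>) * p \<le> x"
    using assms by linarith+
qed

lemma (in prob_space) exists_preimages_not_borel_cantelli_dyadic: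
  assumes T: "T \<in> M \<rightarrow>\<^sub>M M" "distr M M T = M"
    and B: "\<And>j. B j \<in> events"
    and prob_pos: "\<And>j. 0 < prob (B j)" and prob_small: "\<And>j. prob (B j) \<le> (1 / 2) ^ (j + 1)"
  shows "\<exists>level k. (\<forall>n. k n < 2 ^ (level n + 1)) \<and>
    (\<Sum>n. emeasure M ((T ^^ k n) -` B (level n) \<inter> space M)) = \<infinity> \<and>
    (AE x in M. finite {n. (T ^^ n) x \<in> (T ^^ k n) -` B (level n) \<inter> space M})"
proof (rule exists_preimages_not_borel_cantelli[OF T B])
  define m where "m j = nat \<lfloor>(1 / 2) ^ j / prob (B j)\<rfloor>" for j
  have m_pos: "0 < m j" and m_lower: "(1 / 2) ^ (j + 1) \<le> real (m j) * prob (B j)"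
    and m_upper: "real (m j) * prob (B j) \<le> (1 / 2) ^ j" for j
    using floor_divide_mult_bounds[of "prob (B j)" "(1 / 2) ^ j"] prob_pos[of j] prob_small[of j]
    by (simp_all add: m_def)
  show "0 < m j" for j
    by (rule m_pos)
  show "0 < (2::nat) ^ (j + 1)" for j
    by simp
  show "summable (\<lambda>j. real (m j) * prob (B j))"
    using m_upper by (intro summable_comparison_test'[OF summable_geometric[of "1 / 2"], of 0]) auto
  show "\<not> summable (\<lambda>j. real (m j) * real (2 ^ (j + 1)) * prob (B j))"
  proof
    assume "summable (\<lambda>j. real (m j) * real (2 ^ (j + 1)) * prob (B j))"
    then have "(\<lambda>j. real (m j) * real (2 ^ (j + 1)) * prob (B j)) \<longlonglongrightarrow> 0"
      by (rule summable_LIMSEQ_zero)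
    moreover have "1 \<le> real (m j) * real (2 ^ (j + 1)) * prob (B j)" for j
      using m_lower[of j] by (simp add: field_simps power_one_over)
    ultimately have "(1::real) \<le> 0"
      by (intro LIMSEQ_le_const) auto
    then show False
      by simp
  qed
qed

lemma measurable_coordinate_count_space [measurable]:
  "(\<lambda>x::int \<Rightarrow> nat. x i) \<in> borel \<rightarrow>\<^sub>M count_space UNIV"
  using measurable_product_coordinates[of i] measurable_cong_sets[OF refl sets_borel_eq_count_space]
  by blast

lemma sets_cyl [measurable]: "cyl M A a b w \<in> sets borel"
  unfolding cyl_def TMC_def by measurable

lemma funpow_shift: "(shift ^^ n) \<omega> = (\<lambda>i. \<omega> (i + int n))"
  by (induction n arbitrary: \<omega>) (auto simp: shift_def algebra_simps)

lemma TMC_translate_iff: "(\<lambda>i. \<omega> (i + t)) \<in> TMC M A \<longleftrightarrow> \<omega> \<in> TMC M A"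
proof -
  have shift_all: "(\<forall>i. P (i + t)) \<longleftrightarrow> (\<forall>i::int. P i)" for P
    by (metis diff_add_cancel)
  show ?thesis
    using shift_all[of "\<lambda>i. \<omega> i \<in> {1..M}"] shift_all[of "\<lambda>i. A (\<omega> i) (\<omega> (i + 1)) = 1"]
    by (simp add: TMC_def add_ac)
qed

lemma cyl_translate_iff:
  "(\<lambda>i. \<omega> (i + t)) \<in> cyl M A a b w \<longleftrightarrow> \<omega> \<in> cyl M A (a + t) (b + t) (\<lambda>i. w (i - t))"
proof -
  have "(\<forall>i\<in>{a..b}. \<omega> (i + t) = w i) \<longleftrightarrow> (\<forall>i\<in>{a + t..b + t}. \<omega> i = w (i - t))"
  proof
    assume agree: "\<forall>i\<in>{a..b}. \<omega> (i + t) = w i"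
    show "\<forall>i\<in>{a + t..b + t}. \<omega> i = w (i - t)"
    proof
      fix i assume "i \<in> {a + t..b + t}"
      then show "\<omega> i = w (i - t)"
        using agree[rule_format, of "i - t"] by simp
    qed
  qed auto
  then show ?thesis
    by (simp add: cyl_def TMC_translate_iff)
qed

lemma vimage_funpow_shift_cyl:
  "(shift ^^ n) -` cyl M A a b w = cyl M A (a + int n) (b + int n) (\<lambda>i. w (i - int n))"
  by (auto simp: funpow_shift cyl_translate_iff)

section \<open>Small cylinders of Gibbs measures\<close>

lemma gibbs_cyl_pos:
  assumes "gibbs M A \<phi> \<mu>" and "\<omega> \<in> TMC M A"
  shows "0 < measure \<mu> (cyl M A 0 (int n) \<omega>)"
proof -
  obtain C P where "0 < C" and lower: "\<forall>\<omega>\<in>TMC M A. \<forall>n\<ge>1.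
      exp (- real n * P + birkhoff_sum \<phi> n \<omega>) / C \<le> measure \<mu> (cyl M A 0 (int n - 1) \<omega>)"
    using assms(1) unfolding gibbs_def by blast
  have "0 < exp (- real (Suc n) * P + birkhoff_sum \<phi> (Suc n) \<omega>) / C"
    using \<open>0 < C\<close> by simp
  also have "\<dots> \<le> measure \<mu> (cyl M A 0 (int n) \<omega>)"
    using lower assms(2) by fastforce
  finally show ?thesis .
qed

lemma path_of_mat_pow_pos:
  assumes zo: "zero_one_matrix M A" and i: "i \<in> {1..M}"
  shows "j \<in> {1..M} \<Longrightarrow> 0 < mat_pow M A k i j \<Longrightarrow>
    \<exists>p. p 0 = i \<and> p k = j \<and> (\<forall>t\<le>k. p t \<in> {1..M}) \<and> (\<forall>t<k. A (p t) (p (Suc t)) = 1)"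
proof (induction k arbitrary: j)
  case 0
  then show ?case using i by (intro exI[of _ "\<lambda>_. i"]) (auto split: if_splits)
next
  case (Suc k)
  then obtain l where l: "l \<in> {1..M}" "0 < mat_pow M A k i l" "A l j \<noteq> 0"
    by (metis (no_types, lifting) mat_pow.simps(2) mult_is_0 neq0_conv sum.neutral)
  then have "A l j = 1"
    using zo l(1) Suc.prems(1) unfolding zero_one_matrix_def by fastforce
  moreover obtain p where "p 0 = i" "p k = l" "\<forall>t\<le>k. p t \<in> {1..M}" "\<forall>t<k. A (p t) (p (Suc t)) = 1"
    using Suc.IH[OF l(1,2)] by blast
  ultimately show ?case
    using Suc.prems(1) by (intro exI[of _ "p(Suc k := j)"]) (auto simp: less_Suc_eq le_Suc_eq)
qed

lemma exists_TMC_interpolating: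
  assumes zo: "zero_one_matrix M A" and K: "1 \<le> K"
    and primitive: "\<forall>i\<in>{1..M}. \<forall>j\<in>{1..M}. 0 < mat_pow M A K i j"
    and s: "\<And>i. s i \<in> {1..M}"
  shows "\<exists>\<omega>\<in>TMC M A. \<forall>i. \<omega> (int K * i) = s i"
proof -
  have "\<forall>i. \<exists>q. q 0 = s i \<and> q K = s (i + 1) \<and> (\<forall>t\<le>K. q t \<in> {1..M}) \<and> (\<forall>t<K. A (q t) (q (Suc t)) = 1)"
    using path_of_mat_pow_pos[OF zo s s] primitive s by blast
  then obtain p where p: "\<And>i. p i 0 = s i" "\<And>i. p i K = s (i + 1)"
    "\<And>i t. t \<le> K \<Longrightarrow> p i t \<in> {1..M}" "\<And>i t. t < K \<Longrightarrow> A (p i t) (p i (Suc t)) = 1"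
    by metis
  define \<omega> where "\<omega> j = p (j div int K) (nat (j mod int K))" for j
  have \<omega>_at: "\<omega> (int K * i + int t) = p i t" if "t < K" for i t
    using that by (simp add: \<omega>_def)
  have "\<omega> \<in> TMC M A"
    unfolding TMC_def
  proof (intro CollectI conjI allI)
    fix j :: int
    define i where "i = j div int K"
    define t where "t = nat (j mod int K)"
    have t: "t < K" and j: "j = int K * i + int t"
      using K by (simp_all add: i_def t_def nat_less_iff)
    have succ: "\<omega> (j + 1) = p i (Suc t)"
    proof (cases "Suc t < K")
      case True
      then show ?thesis using \<omega>_at[of "Suc t" i] by (simp add: j ac_simps)
    next
      case False
      then have "Suc t = K" using t by simp
      then have "j + 1 = int K * (i + 1) + int 0" by (simp add: j algebra_simps)
      then show ?thesis using \<omega>_at[of 0 "i + 1"] K p(1,2) \<open>Suc t = K\<close> by simp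
    qed
    show "\<omega> j \<in> {1..M}" using \<omega>_at t p(3) by (simp add: j)
    show "A (\<omega> j) (\<omega> (j + 1)) = 1" unfolding succ using \<omega>_at t p(4) by (simp add: j)
  qed
  moreover have "\<omega> (int K * i) = s i" for i
    using \<omega>_at[of 0 i] K p(1) by simp
  ultimately show ?thesis by blast
qed

lemma (in prob_space) exists_prob_le_inverse_card:
  assumes "finite I" "I \<noteq> {}" "disjoint_family_on F I" "F ` I \<subseteq> events"
  shows "\<exists>i\<in>I. prob (F i) \<le> 1 / card I"
proof (rule ccontr)
  assume "\<not> ?thesis"
  then have "(\<Sum>i\<in>I. 1 / card I) < (\<Sum>i\<in>I. prob (F i))"
    using assms(1,2) by (intro sum_strict_mono) (auto simp: not_le)
  also have "\<dots> = prob (\<Union>i\<in>I. F i)"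
    using assms by (simp add: finite_measure_finite_Union)
  also have "\<dots> \<le> 1"
    by (rule prob_le_1)
  finally show False
    using assms(1,2) by simp
qed

locale shift_space_prob = prob_space \<mu> for \<mu> :: "(int \<Rightarrow> nat) measure" +
  assumes sets_eq_borel: "sets \<mu> = sets borel"
begin

lemma space_eq_UNIV: "space \<mu> = UNIV"
  using sets_eq_imp_space_eq[OF sets_eq_borel] by simp

lemma cyl_events [measurable]: "cyl M A a b w \<in> events"
  by (simp add: sets_eq_borel)

lemma exists_small_positive_cylinder:
  assumes zo: "zero_one_matrix M A" and M: "2 \<le> M" and K: "1 \<le> K"
    and primitive: "\<forall>i\<in>{1..M}. \<forall>j\<in>{1..M}. 0 < mat_pow M A K i j"
    and gibbs: "gibbs M A \<phi> \<mu>" and q: "0 < q"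
  shows "\<exists>r\<ge>R. \<exists>v. 0 < prob (cyl M A 0 (2 * int r) v) \<and> prob (cyl M A 0 (2 * int r) v) \<le> q"
proof -
  define N where "N = nat \<lceil>1 / q\<rceil>"
  define r where "r = max R (K * N)"
  have "\<forall>m::nat. \<exists>v\<in>TMC M A. \<forall>i. v (int K * i) = (if i = int m then 2 else 1)"
    using exists_TMC_interpolating[OF zo K primitive] M by simp
  then obtain v where v_TMC: "\<And>m. v m \<in> TMC M A"
    and v_at: "\<And>m i. v m (int K * i) = (if i = int m then 2 else 1)"
    by metis
  define Z where "Z m = cyl M A 0 (2 * int r) (v m)" for m
  have "disjoint_family_on Z {..N}"
    unfolding disjoint_family_on_def
  proof (intro ballI impI)
    fix m m' assume "m \<in> {..N}" "m' \<in> {..N}" "m \<noteq> m'"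
    then have "K * m \<le> K * N"
      by simp
    also have "\<dots> \<le> 2 * r"
      by (simp add: r_def)
    finally have "K * m \<le> 2 * r" .
    then have "int K * int m \<in> {0..2 * int r}"
      by (simp flip: of_nat_mult)
    then show "Z m \<inter> Z m' = {}"
      using v_at[of m "int m"] v_at[of m' "int m"] \<open>m \<noteq> m'\<close> by (auto simp: Z_def cyl_def)
  qed
  moreover have "Z ` {..N} \<subseteq> events"
    by (auto simp: Z_def)
  ultimately obtain m where "prob (Z m) \<le> 1 / card {..N}"
    using exists_prob_le_inverse_card[of "{..N}" Z] by auto
  moreover have "1 / card {..N} \<le> q"
  proof -
    have "1 / q \<le> real N + 1"
      using real_nat_ceiling_ge[of "1 / q"] by (simp add: N_def)
    then show ?thesis
      using q by (simp add: field_simps)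
  qed
  moreover have "0 < prob (Z m)"
    using gibbs_cyl_pos[OF gibbs v_TMC, of "2 * r"] by (simp add: Z_def)
  ultimately show ?thesis
    unfolding Z_def by (intro exI[of _ r] exI[of _ "v m"]) (auto simp: r_def)
qed

end

locale shift_invariant_prob = shift_space_prob +
  assumes shift_measurable: "shift \<in> \<mu> \<rightarrow>\<^sub>M \<mu>" and distr_shift: "distr \<mu> \<mu> shift = \<mu>"
begin

lemma prob_cyl_translate: "prob (cyl M A (a + t) (b + t) (\<lambda>i. w (i - t))) = prob (cyl M A a b w)"
proof -
  have nat_translate: "emeasure \<mu> (cyl M A (a + int n) (b + int n) (\<lambda>i. w (i - int n))) = emeasure \<mu> (cyl M A a b w)"
    for a b w n
    using emeasure_vimage_funpow[OF shift_measurable distr_shift cyl_events, of n M A a b w]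
    by (simp add: vimage_funpow_shift_cyl space_eq_UNIV)
  show ?thesis
  proof (cases "0 \<le> t")
    case True
    then show ?thesis using nat_translate[of a "nat t" b w] by (simp add: measure_def)
  next
    case False
    then show ?thesis
      using nat_translate[of "a + t" "nat (- t)" "b + t" "\<lambda>i. w (i - t)"] by (simp add: measure_def)
  qed
qed

lemma exists_cylinders_not_borel_cantelli:
  fixes g :: "nat \<Rightarrow> int"
  assumes small: "\<forall>q>0. \<forall>R. \<exists>r\<ge>R. \<exists>v.
      0 < prob (cyl M A 0 (2 * int r) v) \<and> prob (cyl M A 0 (2 * int r) v) \<le> q"
    and \<epsilon>: "0 < \<epsilon>"
  shows "\<exists>a b :: nat \<Rightarrow> int. \<exists>w.
    (\<forall>n. \<exists>r k. real k \<le> \<epsilon> * real r \<and> a n = g r + int k \<and> b n = a n + 2 * int r) \<and>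
    (\<Sum>n. emeasure \<mu> (cyl M A (a n) (b n) (w n))) = \<infinity> \<and>
    (AE \<omega> in \<mu>. finite {n. (shift ^^ n) \<omega> \<in> cyl M A (a n) (b n) (w n)})"
proof -
  have "\<exists>r v. 2 ^ (j + 1) \<le> \<epsilon> * real r \<and>
      0 < prob (cyl M A 0 (2 * int r) v) \<and> prob (cyl M A 0 (2 * int r) v) \<le> (1 / 2) ^ (j + 1)" for j
  proof -
    have half_pos: "0 < (1 / 2 :: real) ^ (j + 1)"
      by simp
    obtain r v where "nat \<lceil>2 ^ (j + 1) / \<epsilon>\<rceil> \<le> r"
      and "0 < prob (cyl M A 0 (2 * int r) v)" "prob (cyl M A 0 (2 * int r) v) \<le> (1 / 2) ^ (j + 1)"
      using small[rule_format, OF half_pos, of "nat \<lceil>2 ^ (j + 1) / \<epsilon>\<rceil>"] by blast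
    moreover have "2 ^ (j + 1) \<le> \<epsilon> * real r"
      using calculation(1) real_nat_ceiling_ge[of "2 ^ (j + 1) / \<epsilon>"] \<epsilon> by (simp add: field_simps)
    ultimately show ?thesis by blast
  qed
  then obtain r v where r: "\<And>j. 2 ^ (j + 1) \<le> \<epsilon> * real (r j)"
    and p_pos: "\<And>j. 0 < prob (cyl M A 0 (2 * int (r j)) (v j))"
    and p_small: "\<And>j. prob (cyl M A 0 (2 * int (r j)) (v j)) \<le> (1 / 2) ^ (j + 1)"
    by metis
  define B where "B j = cyl M A (g (r j)) (g (r j) + 2 * int (r j)) (\<lambda>i. v j (i - g (r j)))" for j
  have prob_B: "prob (B j) = prob (cyl M A 0 (2 * int (r j)) (v j))" for j
    using prob_cyl_translate[of M A 0 "g (r j)" "2 * int (r j)" "v j"] by (simp add: B_def add.commute)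
  have B_events: "\<And>j. B j \<in> events"
    by (simp add: B_def)
  have "\<exists>level k. (\<forall>n. k n < 2 ^ (level n + 1)) \<and>
      (\<Sum>n. emeasure \<mu> ((shift ^^ k n) -` B (level n) \<inter> space \<mu>)) = \<infinity> \<and>
      (AE \<omega> in \<mu>. finite {n. (shift ^^ n) \<omega> \<in> (shift ^^ k n) -` B (level n) \<inter> space \<mu>})"
    by (rule exists_preimages_not_borel_cantelli_dyadic[OF shift_measurable distr_shift B_events])
      (simp_all only: prob_B p_pos p_small)
  then obtain level k where k: "\<forall>n. k n < 2 ^ (level n + 1)"
    and diverges: "(\<Sum>n. emeasure \<mu> ((shift ^^ k n) -` B (level n) \<inter> space \<mu>)) = \<infinity>"
    and finite_hits: "AE \<omega> in \<mu>. finite {n. (shift ^^ n) \<omega> \<in> (shift ^^ k n) -` B (level n) \<inter> space \<mu>}"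
    by blast
  have "real (k n) \<le> \<epsilon> * real (r (level n))" for n
  proof -
    have "real (k n) \<le> 2 ^ (level n + 1)"
      using k by (metis less_imp_le of_nat_le_iff of_nat_numeral of_nat_power)
    also have "\<dots> \<le> \<epsilon> * real (r (level n))"
      by (rule r)
    finally show ?thesis .
  qed
  moreover have "(shift ^^ k n) -` B (level n) \<inter> space \<mu> =
      cyl M A (g (r (level n)) + int (k n)) (g (r (level n)) + int (k n) + 2 * int (r (level n)))
        (\<lambda>i. v (level n) (i - int (k n) - g (r (level n))))" for n
    by (simp add: B_def vimage_funpow_shift_cyl space_eq_UNIV algebra_simps)
  ultimately show ?thesis
    using diverges finite_hits
    by (intro exI[of _ "\<lambda>n. g (r (level n)) + int (k n)"] exI[of _ "\<lambda>n. g (r (level n)) + int (k n) + 2 * int (r (level n))"]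
        exI[of _ "\<lambda>n i. v (level n) (i - int (k n) - g (r (level n)))"]) auto
qed

end

theorem theorem2p3:
  fixes M K :: nat and A :: "nat \<Rightarrow> nat \<Rightarrow> nat" and \<phi> :: "(int \<Rightarrow> nat) \<Rightarrow> real"
    and \<mu> :: "(int \<Rightarrow> nat) measure" and \<epsilon> :: real
  assumes "M \<ge> 2" and "zero_one_matrix M A"
    and "K \<ge> 1" and "\<forall>i\<in>{1..M}. \<forall>j\<in>{1..M}. mat_pow M A K i j > 0"
    and "holder M A \<phi>"
    and "prob_space \<mu>" and "sets \<mu> = sets borel" and "emeasure \<mu> (TMC M A) = 1"
    and "shift \<in> measurable \<mu> \<mu>" and "distr \<mu> \<mu> shift = \<mu>"
    and "gibbs M A \<phi> \<mu>"
    and "\<epsilon> > 0"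
  shows
    "(\<exists>a b :: nat \<Rightarrow> int. \<exists>w :: nat \<Rightarrow> int \<Rightarrow> nat.
        (\<forall>n. a n \<le> b n) \<and>
        (\<Sum>n. emeasure \<mu> (cyl M A (a n) (b n) (w n))) = \<infinity> \<and>
        (\<forall>n. \<bar>real_of_int (a n + b n) / 2\<bar> \<le> \<epsilon> * real_of_int (b n - a n + 1) / 2) \<and>
        (AE \<omega> in \<mu>. finite {n. (shift ^^ n) \<omega> \<in> cyl M A (a n) (b n) (w n)}))
   \<and> (\<exists>a b :: nat \<Rightarrow> int. \<exists>w :: nat \<Rightarrow> int \<Rightarrow> nat.
        (\<forall>n. a n \<le> b n) \<and>
        (\<Sum>n. emeasure \<mu> (cyl M A (a n) (b n) (w n))) = \<infinity> \<and>
        (\<forall>n. 0 \<le> a n \<and> real_of_int (a n) \<le> \<epsilon> * real_of_int (b n - a n + 1)) \<and>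
        (AE \<omega> in \<mu>. finite {n. (shift ^^ n) \<omega> \<in> cyl M A (a n) (b n) (w n)}))"
proof -
  interpret prob_space \<mu>
    by (fact assms(6))
  interpret shift_invariant_prob \<mu>
    by unfold_locales (fact assms)+
  have small: "\<forall>q>0. \<forall>R. \<exists>r\<ge>R. \<exists>v.
      0 < prob (cyl M A 0 (2 * int r) v) \<and> prob (cyl M A 0 (2 * int r) v) \<le> q"
    by (intro allI impI exists_small_positive_cylinder[OF assms(2,1,3,4,11)])
  obtain a b w where centered: "\<forall>n. \<exists>r k. real k \<le> \<epsilon> * real r \<and> a n = - int r + int k \<and> b n = a n + 2 * int r"
    and "(\<Sum>n. emeasure \<mu> (cyl M A (a n) (b n) (w n))) = \<infinity>"
    and "AE \<omega> in \<mu>. finite {n. (shift ^^ n) \<omega> \<in> cyl M A (a n) (b n) (w n)}"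
    using exists_cylinders_not_borel_cantelli[OF small assms(12), where g = "\<lambda>r. - int r"] by blast
  moreover have "a n \<le> b n \<and> \<bar>real_of_int (a n + b n) / 2\<bar> \<le> \<epsilon> * real_of_int (b n - a n + 1) / 2" for n
    using centered[rule_format, of n] assms(12) by (auto simp: ring_distribs)
  moreover obtain a' b' w' where left: "\<forall>n. \<exists>r k. real k \<le> \<epsilon> * real r \<and> a' n = 0 + int k \<and> b' n = a' n + 2 * int r"
    and "(\<Sum>n. emeasure \<mu> (cyl M A (a' n) (b' n) (w' n))) = \<infinity>"
    and "AE \<omega> in \<mu>. finite {n. (shift ^^ n) \<omega> \<in> cyl M A (a' n) (b' n) (w' n)}"
    using exists_cylinders_not_borel_cantelli[OF small assms(12), where g = "\<lambda>_. 0"] by blast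
  moreover have "a' n \<le> b' n \<and> 0 \<le> a' n \<and> real_of_int (a' n) \<le> \<epsilon> * real_of_int (b' n - a' n + 1)" for n
    using left[rule_format, of n] assms(12) by (auto simp: ring_distribs)
  ultimately show ?thesis
    by blast
qed

end
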